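(* Let $X,Y$ be finite nonempty sets, $A\in\{0,1\}^{X\times Y}$, $\delta,\epsilon>0$, integers $k,\ell\ge1$, and let $\mathcal S,\mathcal T$ be $(\epsilon,\delta)$-oblivious samplers of $X$ and $Y$, respectively. Then $$\Big|\|A\|_{U(k,\ell)}^{k\ell}-\mathbb{E}_{S\in\mathcal S,\,T\in\mathcal T}\|A[S,T]\|_{U(k,\ell)}^{k\ell}\Big|\le 2\epsilon k+2\epsilon\ell+2\delta.$$
   Context: An $(\epsilon,\delta)$-oblivious sampler of a finite set $X$ is a finite nonempty family $\mathcal S$ of nonempty subsets $S\subseteq X$ such that for every function $f:X\to[0,1]$, $\Pr_{S\in\mathcal S}\big[|\mathbb{E}_{x\in X}f(x)-\mathbb{E}_{x\in S}f(x)|\le\epsilon\big]\ge1-\delta$, where $S$ is uniform over $\mathcal S$ and $\mathbb E_{x\in S}$ is the uniform average over $S$. $A[S,T]$ is the submatrix with rows $S$ and columns $T$. The $(k,\ell)$-grid norm of $M\in\mathbb{R}_{\ge0}^{X'\times Y'}$ is $\|M\|_{U(k,\ell)}=\big(\mathbb{E}_{x_1,\dots,x_k\in X',\,y_1,\dots,y_\ell\in Y'}\prod_{i,j}M(x_i,y_j)\big)^{1/(k\ell)}$. *)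

theory Defs
  imports Complex_Main "HOL-Library.FuncSet"
begin

definition avg :: "'a set \<Rightarrow> ('a \<Rightarrow> real) \<Rightarrow> real" where
  "avg S f = (\<Sum>x\<in>S. f x) / real (card S)"

text \<open>An (eps,delta)-oblivious sampler of X, given as a finite nonempty indexed family
  (S i) for i in I (indexing allows repeated members of the family); S is uniform over I.\<close>
definition oblivious_sampler ::
  "'a set \<Rightarrow> 'i set \<Rightarrow> ('i \<Rightarrow> 'a set) \<Rightarrow> real \<Rightarrow> real \<Rightarrow> bool" where
  "oblivious_sampler X I S eps delta \<longleftrightarrow>
     finite I \<and> I \<noteq> {} \<and> (\<forall>i\<in>I. S i \<noteq> {} \<and> S i \<subseteq> X) \<and>
     (\<forall>f :: 'a \<Rightarrow> real. (\<forall>x\<in>X. 0 \<le> f x \<and> f x \<le> 1) \<longrightarrow>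
        real (card {i\<in>I. \<bar>avg X f - avg (S i) f\<bar> \<le> eps}) / real (card I) \<ge> 1 - delta)"

text \<open>(k,l)-grid norm of the matrix M restricted to rows X' and columns Y'
  (so grid_norm A S T k l is the grid norm of the submatrix A[S,T]).\<close>
definition grid_norm ::
  "('a \<Rightarrow> 'b \<Rightarrow> real) \<Rightarrow> 'a set \<Rightarrow> 'b set \<Rightarrow> nat \<Rightarrow> nat \<Rightarrow> real" where
  "grid_norm M X' Y' k l =
     ((\<Sum>xs\<in>{..<k} \<rightarrow>\<^sub>E X'. \<Sum>ys\<in>{..<l} \<rightarrow>\<^sub>E Y'.
         \<Prod>i<k. \<Prod>j<l. M (xs i) (ys j))
       / (real (card X') ^ k * real (card Y') ^ l)) powr (1 / real (k * l))"

end

theory Submission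
  imports Defs
begin

text \<open>Writing the normalised density of (k,l)-grids in A as an average over the column tuples
  ys of (avg over x of \<Prod>j. A x (ys j))^k, replacing X by a sample S only changes the inner
  averages; for every fixed ys the sampler keeps them eps-close except with probability delta,
  and x \<mapsto> x^k is k-Lipschitz on [0,1]. This costs k eps + delta; transposing, sampling
  the columns costs l eps + delta.\<close>

lemma abs_power_diff_le:
  fixes a b :: real
  assumes "0 \<le> a" "a \<le> 1" "0 \<le> b" "b \<le> 1"
  shows "\<bar>a ^ n - b ^ n\<bar> \<le> real n * \<bar>a - b\<bar>"
proof (induction n)
  case 0 then show ?case by simp
next
  case (Suc n)
  have "a ^ Suc n - b ^ Suc n = a * (a ^ n - b ^ n) + b ^ n * (a - b)"
    by (simp add: algebra_simps)
  hence "\<bar>a ^ Suc n - b ^ Suc n\<bar> \<le> \<bar>a\<bar> * \<bar>a ^ n - b ^ n\<bar> + \<bar>b ^ n\<bar> * \<bar>a - b\<bar>"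
    by (metis abs_mult abs_triangle_ineq)
  also have "\<dots> \<le> 1 * \<bar>a ^ n - b ^ n\<bar> + 1 * \<bar>a - b\<bar>"
    using assms by (intro add_mono mult_right_mono) (auto simp: power_le_one)
  also have "\<dots> \<le> real n * \<bar>a - b\<bar> + \<bar>a - b\<bar>" using Suc by simp
  finally show ?case by (simp add: algebra_simps)
qed

lemma avg_cong: "(\<And>x. x \<in> S \<Longrightarrow> f x = g x) \<Longrightarrow> avg S f = avg S g"
  unfolding avg_def by (metis sum.cong)

lemma avg_const: "finite S \<Longrightarrow> S \<noteq> {} \<Longrightarrow> avg S (\<lambda>_. c) = c"
  by (simp add: avg_def)

lemma avg_diff: "avg S f - avg S g = avg S (\<lambda>x. f x - g x)"
  by (simp add: avg_def sum_subtractf diff_divide_distrib)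

lemma abs_avg_le: "\<bar>avg S f\<bar> \<le> avg S (\<lambda>x. \<bar>f x\<bar>)"
  by (simp add: avg_def abs_divide divide_right_mono sum_abs)

lemma avg_swap: "avg I (\<lambda>i. avg P (H i)) = avg P (\<lambda>p. avg I (\<lambda>i. H i p))"
  unfolding avg_def
  by (simp add: sum_divide_distrib[symmetric] sum.swap[of _ P I] divide_divide_eq_left mult.commute)

lemma avg_avg: "avg I (\<lambda>i. avg J (f i)) = (\<Sum>i\<in>I. \<Sum>j\<in>J. f i j) / (real (card I) * real (card J))"
  unfolding avg_def by (simp add: sum_divide_distrib[symmetric] divide_divide_eq_left mult.commute)

lemma avg_le_bound:
  assumes "finite S" "S \<noteq> {}" "\<And>x. x \<in> S \<Longrightarrow> f x \<le> c"
  shows "avg S f \<le> c"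
proof -
  have "(\<Sum>x\<in>S. f x) \<le> real (card S) * c" using assms sum_bounded_above by metis
  moreover have "real (card S) > 0" using assms by auto
  ultimately show ?thesis by (simp add: avg_def pos_divide_le_eq mult.commute)
qed

lemma avg_ge_bound:
  assumes "finite S" "S \<noteq> {}" "\<And>x. x \<in> S \<Longrightarrow> c \<le> f x"
  shows "c \<le> avg S f"
proof -
  have "real (card S) * c \<le> (\<Sum>x\<in>S. f x)" using assms sum_bounded_below by metis
  moreover have "real (card S) > 0" using assms by auto
  ultimately show ?thesis by (simp add: avg_def pos_le_divide_eq mult.commute)
qed

lemma avg_in_unit_interval:
  assumes "finite S" "S \<noteq> {}" "\<forall>x\<in>S. 0 \<le> f x \<and> f x \<le> 1"
  shows "0 \<le> avg S f \<and> avg S f \<le> 1"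
  using assms avg_le_bound[of S f 1] avg_ge_bound[of S 0 f] by auto

lemma oblivious_samplerD:
  assumes "oblivious_sampler X I S eps delta"
  shows "finite I" "I \<noteq> {}" "\<And>i. i \<in> I \<Longrightarrow> S i \<noteq> {}" "\<And>i. i \<in> I \<Longrightarrow> S i \<subseteq> X"
  using assms unfolding oblivious_sampler_def by auto

lemma oblivious_sampler_nonempty:
  "oblivious_sampler X I S eps delta \<Longrightarrow> X \<noteq> {}"
  by (metis all_not_in_conv oblivious_samplerD subset_empty)

lemma oblivious_sampler_finite_sample:
  "oblivious_sampler X I S eps delta \<Longrightarrow> finite X \<Longrightarrow> i \<in> I \<Longrightarrow> finite (S i)"
  by (meson finite_subset oblivious_samplerD(4))

lemma oblivious_sampler_avg_power:
  assumes os: "oblivious_sampler X I S eps delta" and "finite X" "eps \<ge> 0"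
    and f: "\<forall>x\<in>X. 0 \<le> f x \<and> f x \<le> 1"
  shows "avg I (\<lambda>i. \<bar>avg X f ^ k - avg (S i) f ^ k\<bar>) \<le> real k * eps + delta"
proof -
  define G where "G = {i\<in>I. \<bar>avg X f - avg (S i) f\<bar> \<le> eps}"
  define h where "h i = \<bar>avg X f ^ k - avg (S i) f ^ k\<bar>" for i
  note I = oblivious_samplerD[OF os]
  have good: "real (card G) / real (card I) \<ge> 1 - delta"
    using os f unfolding oblivious_sampler_def G_def by blast
  have cI: "real (card I) > 0" using I by auto
  have aX: "0 \<le> avg X f \<and> avg X f \<le> 1"
    using avg_in_unit_interval[OF \<open>finite X\<close> oblivious_sampler_nonempty[OF os] f] .
  have aS: "0 \<le> avg (S i) f \<and> avg (S i) f \<le> 1" if "i \<in> I" for i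
    using that I(3,4) oblivious_sampler_finite_sample[OF os \<open>finite X\<close>] f
    by (intro avg_in_unit_interval) blast+
  have h_good: "h i \<le> real k * eps" if "i \<in> G" for i
  proof -
    have "h i \<le> real k * \<bar>avg X f - avg (S i) f\<bar>"
      unfolding h_def using G_def that aX aS by (intro abs_power_diff_le) auto
    also have "\<dots> \<le> real k * eps" using that G_def by (intro mult_left_mono) auto
    finally show ?thesis .
  qed
  have h_le_1: "h i \<le> 1" if "i \<in> I" for i
  proof -
    have "0 \<le> avg X f ^ k" "avg X f ^ k \<le> 1" "0 \<le> avg (S i) f ^ k" "avg (S i) f ^ k \<le> 1"
      using aX aS[OF that] by (auto simp: power_le_one)
    then show ?thesis unfolding h_def by linarith
  qed
  have GI: "G \<subseteq> I" "finite G" using I G_def by auto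
  have "(\<Sum>i\<in>I. h i) = (\<Sum>i\<in>G. h i) + (\<Sum>i\<in>I - G. h i)"
    using GI I by (metis sum.subset_diff add.commute)
  also have "\<dots> \<le> real (card G) * (real k * eps) + real (card I - card G)"
  proof (rule add_mono)
    show "(\<Sum>i\<in>G. h i) \<le> real (card G) * (real k * eps)"
      using h_good sum_bounded_above[of G h] by blast
    show "(\<Sum>i\<in>I - G. h i) \<le> real (card I - card G)"
      using h_le_1 sum_bounded_above[of "I - G" h 1] GI I by (simp add: card_Diff_subset)
  qed
  also have "\<dots> \<le> real (card I) * (real k * eps + delta)"
  proof -
    have "card G \<le> card I" using GI I card_mono by blast
    moreover have "real (card G) \<ge> (1 - delta) * real (card I)"
      using good cI by (simp add: field_simps)
    moreover have "real (card G) * (real k * eps) \<le> real (card I) * (real k * eps)"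
      using \<open>card G \<le> card I\<close> \<open>eps \<ge> 0\<close> by (intro mult_right_mono) auto
    ultimately show ?thesis by (simp add: of_nat_diff algebra_simps)
  qed
  finally have "avg I h \<le> real k * eps + delta" unfolding avg_def using cI by (simp add: field_simps)
  then show ?thesis unfolding h_def .
qed

lemma oblivious_sampler_avg_power_family:
  assumes os: "oblivious_sampler X I S eps delta" and "finite X" "eps \<ge> 0"
    and P: "finite P" "P \<noteq> {}"
    and g: "\<forall>p\<in>P. \<forall>x\<in>X. 0 \<le> g p x \<and> g p x \<le> 1"
  shows "\<bar>avg P (\<lambda>p. avg X (g p) ^ k) - avg I (\<lambda>i. avg P (\<lambda>p. avg (S i) (g p) ^ k))\<bar>
           \<le> real k * eps + delta"
proof -
  note I = oblivious_samplerD[OF os]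
  have "avg P (\<lambda>p. avg X (g p) ^ k) - avg I (\<lambda>i. avg P (\<lambda>p. avg (S i) (g p) ^ k))
      = avg P (\<lambda>p. avg I (\<lambda>i. avg X (g p) ^ k)) - avg P (\<lambda>p. avg I (\<lambda>i. avg (S i) (g p) ^ k))"
    using avg_const[OF I(1,2)] avg_swap[of I P "\<lambda>i p. avg (S i) (g p) ^ k"] by simp
  also have "\<dots> = avg P (\<lambda>p. avg I (\<lambda>i. avg X (g p) ^ k - avg (S i) (g p) ^ k))"
    by (simp only: avg_diff)
  also have "\<bar>\<dots>\<bar> \<le> avg P (\<lambda>p. \<bar>avg I (\<lambda>i. avg X (g p) ^ k - avg (S i) (g p) ^ k)\<bar>)"
    by (rule abs_avg_le)
  also have "\<dots> \<le> real k * eps + delta"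
  proof (rule avg_le_bound[OF P])
    fix p assume "p \<in> P"
    have "\<bar>avg I (\<lambda>i. avg X (g p) ^ k - avg (S i) (g p) ^ k)\<bar>
       \<le> avg I (\<lambda>i. \<bar>avg X (g p) ^ k - avg (S i) (g p) ^ k\<bar>)" by (rule abs_avg_le)
    also have "\<dots> \<le> real k * eps + delta"
      using oblivious_sampler_avg_power[OF os \<open>finite X\<close> \<open>eps \<ge> 0\<close>] g \<open>p \<in> P\<close> by blast
    finally show "\<bar>avg I (\<lambda>i. avg X (g p) ^ k - avg (S i) (g p) ^ k)\<bar> \<le> real k * eps + delta" .
  qed
  finally show ?thesis .
qed

definition grid_density :: "('a \<Rightarrow> 'b \<Rightarrow> real) \<Rightarrow> 'a set \<Rightarrow> 'b set \<Rightarrow> nat \<Rightarrow> nat \<Rightarrow> real" where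
  "grid_density M X' Y' k l = (\<Sum>xs\<in>{..<k} \<rightarrow>\<^sub>E X'. \<Sum>ys\<in>{..<l} \<rightarrow>\<^sub>E Y'.
         \<Prod>i<k. \<Prod>j<l. M (xs i) (ys j))
       / (real (card X') ^ k * real (card Y') ^ l)"

lemma grid_density_nonneg:
  assumes "\<forall>x\<in>X'. \<forall>y\<in>Y'. 0 \<le> M x y"
  shows "grid_density M X' Y' k l \<ge> 0"
  unfolding grid_density_def using assms
  by (intro divide_nonneg_nonneg sum_nonneg prod_nonneg) (auto simp: PiE_iff)

lemma grid_norm_power_eq_density:
  assumes "grid_density M X' Y' k l \<ge> 0" "k \<ge> 1" "l \<ge> 1"
  shows "grid_norm M X' Y' k l ^ (k * l) = grid_density M X' Y' k l"
proof -
  have "grid_norm M X' Y' k l = grid_density M X' Y' k l powr (1 / real (k * l))"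
    unfolding grid_norm_def grid_density_def ..
  moreover have "(d powr (1 / real (k * l))) ^ (k * l) = d" if "d \<ge> 0" for d :: real
    using that assms(2,3)
    by (cases "d = 0") (simp_all add: powr_realpow[symmetric] powr_powr)
  ultimately show ?thesis using assms(1) by simp
qed

lemma grid_density_transpose:
  "grid_density M X' Y' k l = grid_density (\<lambda>y x. M x y) Y' X' l k"
  unfolding grid_density_def
  by (simp add: sum.swap[of _ "{..<k} \<rightarrow>\<^sub>E X'"] prod.swap[of _ "{..<k}"] mult.commute)

lemma grid_density_by_column_tuples:
  assumes "finite X'" "finite Y'" "X' \<noteq> {}" "Y' \<noteq> {}"
  shows "grid_density M X' Y' k l
           = avg ({..<l} \<rightarrow>\<^sub>E Y') (\<lambda>ys. avg X' (\<lambda>x. \<Prod>j<l. M x (ys j)) ^ k)"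
proof -
  have row_sum: "(\<Sum>xs\<in>{..<k} \<rightarrow>\<^sub>E X'. \<Prod>i<k. \<Prod>j<l. M (xs i) (ys j))
        = (\<Sum>x\<in>X'. \<Prod>j<l. M x (ys j)) ^ k" for ys
    using prod_sum_PiE[of "{..<k}" "\<lambda>_. X'" "\<lambda>i x. \<Prod>j<l. M x (ys j)"] assms by simp
  have sums: "(\<Sum>xs\<in>{..<k} \<rightarrow>\<^sub>E X'. \<Sum>ys\<in>{..<l} \<rightarrow>\<^sub>E Y'. \<Prod>i<k. \<Prod>j<l. M (xs i) (ys j))
      = (\<Sum>ys\<in>{..<l} \<rightarrow>\<^sub>E Y'. (\<Sum>x\<in>X'. \<Prod>j<l. M x (ys j)) ^ k)"
    by (subst sum.swap) (simp only: row_sum)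
  have "card ({..<l} \<rightarrow>\<^sub>E Y') = card Y' ^ l" by (simp add: card_PiE)
  then show ?thesis
    unfolding grid_density_def avg_def sums
    using assms by (simp add: power_divide sum_divide_distrib[symmetric] field_simps)
qed

lemma grid_density_row_sampling:
  assumes os: "oblivious_sampler X I S eps delta" and "finite X" "eps \<ge> 0"
    and "finite Y" "Y \<noteq> {}"
    and M: "\<forall>x\<in>X. \<forall>y\<in>Y. 0 \<le> M x y \<and> M x y \<le> 1"
  shows "\<bar>grid_density M X Y k l - avg I (\<lambda>i. grid_density M (S i) Y k l)\<bar> \<le> real k * eps + delta"
proof -
  define P where "P = {..<l} \<rightarrow>\<^sub>E Y"
  define g where "g ys x = (\<Prod>j<l. M x (ys j))" for ys x
  note I = oblivious_samplerD[OF os]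
  have P: "finite P" "P \<noteq> {}"
    unfolding P_def using assms by (auto simp: finite_PiE PiE_eq_empty_iff)
  have g: "\<forall>p\<in>P. \<forall>x\<in>X. 0 \<le> g p x \<and> g p x \<le> 1"
    unfolding g_def P_def using M by (auto intro: prod_nonneg prod_le_1 simp: PiE_iff)
  have "grid_density M X Y k l = avg P (\<lambda>p. avg X (g p) ^ k)"
    unfolding P_def g_def
    using assms oblivious_sampler_nonempty[OF os] by (intro grid_density_by_column_tuples)
  moreover have "avg I (\<lambda>i. grid_density M (S i) Y k l) = avg I (\<lambda>i. avg P (\<lambda>p. avg (S i) (g p) ^ k))"
    unfolding P_def g_def using I assms oblivious_sampler_finite_sample[OF os \<open>finite X\<close>]
    by (intro avg_cong grid_density_by_column_tuples) auto
  ultimately show ?thesis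
    using oblivious_sampler_avg_power_family[OF os \<open>finite X\<close> \<open>eps \<ge> 0\<close> P g] by simp
qed

lemma grid_density_column_sampling:
  assumes os: "oblivious_sampler Y J T eps delta" and "finite Y" "eps \<ge> 0"
    and "finite X" "X \<noteq> {}"
    and M: "\<forall>x\<in>X. \<forall>y\<in>Y. 0 \<le> M x y \<and> M x y \<le> 1"
  shows "\<bar>grid_density M X Y k l - avg J (\<lambda>j. grid_density M X (T j) k l)\<bar> \<le> real l * eps + delta"
  using grid_density_row_sampling[OF os \<open>finite Y\<close> \<open>eps \<ge> 0\<close> \<open>finite X\<close> \<open>X \<noteq> {}\<close>,
      of "\<lambda>y x. M x y" l k] M
  by (simp add: grid_density_transpose[of M])

lemma grid_density_sampling:
  assumes osX: "oblivious_sampler X I S eps delta" and osY: "oblivious_sampler Y J T eps delta"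
    and "finite X" "finite Y" "eps \<ge> 0"
    and M: "\<forall>x\<in>X. \<forall>y\<in>Y. 0 \<le> M x y \<and> M x y \<le> 1"
  shows "\<bar>grid_density M X Y k l - avg I (\<lambda>i. avg J (\<lambda>j. grid_density M (S i) (T j) k l))\<bar>
           \<le> real k * eps + real l * eps + 2 * delta"
proof -
  note I = oblivious_samplerD[OF osX]
  have rows: "\<bar>grid_density M X Y k l - avg I (\<lambda>i. grid_density M (S i) Y k l)\<bar> \<le> real k * eps + delta"
    using grid_density_row_sampling[OF osX \<open>finite X\<close> \<open>eps \<ge> 0\<close> \<open>finite Y\<close>
        oblivious_sampler_nonempty[OF osY] M] .
  have "\<bar>avg I (\<lambda>i. grid_density M (S i) Y k l - avg J (\<lambda>j. grid_density M (S i) (T j) k l))\<bar>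
      \<le> avg I (\<lambda>i. \<bar>grid_density M (S i) Y k l - avg J (\<lambda>j. grid_density M (S i) (T j) k l)\<bar>)"
    by (rule abs_avg_le)
  also have "\<dots> \<le> real l * eps + delta"
  proof (rule avg_le_bound[OF I(1,2)])
    fix i assume "i \<in> I"
    have "\<forall>x\<in>S i. \<forall>y\<in>Y. 0 \<le> M x y \<and> M x y \<le> 1"
      using M I(4)[OF \<open>i \<in> I\<close>] by blast
    then show "\<bar>grid_density M (S i) Y k l - avg J (\<lambda>j. grid_density M (S i) (T j) k l)\<bar>
        \<le> real l * eps + delta"
      using grid_density_column_sampling[OF osY \<open>finite Y\<close> \<open>eps \<ge> 0\<close>
          oblivious_sampler_finite_sample[OF osX \<open>finite X\<close> \<open>i \<in> I\<close>] I(3)[OF \<open>i \<in> I\<close>]]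
      by blast
  qed
  finally show ?thesis using rows unfolding avg_diff[symmetric] by linarith
qed

theorem lemma4p7:
  fixes X :: "'a set" and Y :: "'b set" and A :: "'a \<Rightarrow> 'b \<Rightarrow> real"
    and I :: "'i set" and S :: "'i \<Rightarrow> 'a set"
    and J :: "'j set" and T :: "'j \<Rightarrow> 'b set"
    and eps delta :: real and k l :: nat
  assumes "finite X" "X \<noteq> {}" "finite Y" "Y \<noteq> {}"
    and "\<forall>x\<in>X. \<forall>y\<in>Y. A x y \<in> {0, 1}"
    and "delta > 0" "eps > 0" "k \<ge> 1" "l \<ge> 1"
    and "oblivious_sampler X I S eps delta"
    and "oblivious_sampler Y J T eps delta"
  shows "\<bar>grid_norm A X Y k l ^ (k * l)
           - (\<Sum>i\<in>I. \<Sum>j\<in>J. grid_norm A (S i) (T j) k l ^ (k * l))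
               / (real (card I) * real (card J))\<bar>
         \<le> 2 * eps * real k + 2 * eps * real l + 2 * delta"
proof -
  have A: "\<forall>x\<in>X. \<forall>y\<in>Y. 0 \<le> A x y \<and> A x y \<le> 1"
    using assms(5) by (metis empty_iff insert_iff order.refl zero_le_one)
  have norm_eq: "grid_norm A X' Y' k l ^ (k * l) = grid_density A X' Y' k l"
    if "X' \<subseteq> X" "Y' \<subseteq> Y" for X' Y'
    using that A assms(8,9) by (intro grid_norm_power_eq_density grid_density_nonneg) auto
  have "(\<Sum>i\<in>I. \<Sum>j\<in>J. grid_norm A (S i) (T j) k l ^ (k * l))
      = (\<Sum>i\<in>I. \<Sum>j\<in>J. grid_density A (S i) (T j) k l)"
    using norm_eq oblivious_samplerD(4)[OF assms(10)] oblivious_samplerD(4)[OF assms(11)]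
    by (intro sum.cong) auto
  moreover have "\<bar>grid_density A X Y k l - avg I (\<lambda>i. avg J (\<lambda>j. grid_density A (S i) (T j) k l))\<bar>
      \<le> real k * eps + real l * eps + 2 * delta"
    using grid_density_sampling[OF assms(10,11,1,3)] assms(7) A by simp
  ultimately have "\<bar>grid_norm A X Y k l ^ (k * l)
      - (\<Sum>i\<in>I. \<Sum>j\<in>J. grid_norm A (S i) (T j) k l ^ (k * l)) / (real (card I) * real (card J))\<bar>
      \<le> real k * eps + real l * eps + 2 * delta"
    using norm_eq[of X Y] unfolding avg_avg by simp
  moreover have "0 \<le> eps * real k" "0 \<le> eps * real l" using assms(7) by simp_all
  ultimately show ?thesis by (simp add: algebra_simps)
qed

end
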